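(* Let $0\le a\le 1$. Then for every $v>0$, $$\int_0^a \frac{e^{-vu}\,u\, du}{\log^2 u+1}\approx \frac{1}{(v+1/a)^2\bigl(\log^2 (v+1/a)+1\bigr)}.$$ If additionally $av\le 1$, then $$\int_a^1 \frac{e^{-vu}\,u^{1/2}\, du}{1-\log u}\approx \frac{1-a}{(v+1)^{3/2}\bigl(1+\log (v+1)\bigr)}.$$
   Context: $f\approx g$ means $c^{-1}g\le f\le cg$ for an absolute constant $c>0$, uniformly over the indicated $a$ and $v$. *)

theory Defs
  imports "HOL-Analysis.Analysis"
begin

end

theory Submission
  imports Defs
begin

(* Write w for the scale of the problem: w = v + 1/a in the first estimate, w = v + 1 in
   the second.  For u \<le> 1/w the integrand is at most its size at u = 1/w, since
   exp (-v u) \<le> 1 and |ln u| \<ge> ln w; this produces the main term.  For u \<ge> 1/w put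
   r = u w \<ge> 1.  Then r \<le> 1 + v u, so exp (-v u) r^n \<le> n^n, and this decay absorbs both
   the powers of r and the logarithmic loss ln w = -ln u + ln r: the integrand is
   O(1/u\<^sup>2) with the right constant, and the tail is of the same order as the main term.
   For the lower bounds one integrates over a window of length 1/(2w) where u is
   comparable to 1/w and v u is bounded; in the second estimate with a \<ge> 1/2 the
   integrand is simply bounded below by a constant on [a,1]. *)

lemma continuous_on_if_dominated_at_left:
  fixes f g :: "real \<Rightarrow> real"
  assumes "\<And>x. a < x \<Longrightarrow> x \<le> b \<Longrightarrow> isCont f x"
    and "f a = 0" and "continuous_on {a..b} g" and "g a = 0"
    and "\<And>u. a \<le> u \<Longrightarrow> u \<le> b \<Longrightarrow> \<bar>f u\<bar> \<le> g u"
  shows "continuous_on {a..b} f"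
  unfolding continuous_on_eq_continuous_within
proof
  fix x assume x: "x \<in> {a..b}"
  show "continuous (at x within {a..b}) f"
  proof (cases "x = a")
    case True
    have "(g \<longlongrightarrow> 0) (at a within {a..b})"
      using assms(3,4) x True by (metis continuous_on_def)
    then have "(f \<longlongrightarrow> 0) (at a within {a..b})"
      by (rule Lim_null_comparison[rotated])
        (auto simp: eventually_at_filter intro!: always_eventually assms(5))
    then show ?thesis using True assms(2) by (simp add: continuous_within)
  qed (use x assms(1) in \<open>auto intro: continuous_at_imp_continuous_within\<close>)
qed

lemma exp_minus_times_power_le:
  fixes x r :: real
  assumes "0 \<le> x" "1 \<le> r" "r \<le> 1 + x" "n > 0"
  shows "exp (- x) * r ^ n \<le> real n ^ n"
proof -
  have "real n * (1 + x / n) = real n + x" using assms by (simp add: field_simps)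
  then have "r \<le> real n * (1 + x / n)" using assms by simp
  then have "r ^ n \<le> (real n * (1 + x / n)) ^ n"
    using assms by (intro power_mono) auto
  also have "\<dots> = real n ^ n * (1 + x / n) ^ n" by (simp add: power_mult_distrib)
  also have "(1 + x / n) ^ n \<le> exp (x / n) ^ n"
    using assms by (intro power_mono) (auto simp: exp_ge_add_one_self)
  also have "exp (x / n) ^ n = exp x"
    using assms by (simp add: exp_of_nat_mult[symmetric])
  finally have "r ^ n \<le> real n ^ n * exp x" by (simp add: mult_left_mono)
  then show ?thesis by (simp add: exp_minus field_simps)
qed

lemma power2_sum_plus_one_le:
  fixes M D :: real
  assumes "0 \<le> D"
  shows "(M + D)\<^sup>2 + 1 \<le> (M\<^sup>2 + 1) * (1 + D)\<^sup>2"
proof -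
  have "(M\<^sup>2 + 1) * (1 + D)\<^sup>2 - ((M + D)\<^sup>2 + 1) = D * ((M - 1)\<^sup>2 + M\<^sup>2 + 1) + (M * D)\<^sup>2"
    by (simp add: power2_eq_square algebra_simps)
  moreover have "0 \<le> D * ((M - 1)\<^sup>2 + M\<^sup>2 + 1) + (M * D)\<^sup>2" using assms by simp
  ultimately show ?thesis by linarith
qed

lemma inverse_power_three_le_exp_minus: "1 / 3 ^ n \<le> exp (- real n)"
proof -
  have "exp (real n) = exp 1 ^ n" by (simp add: exp_of_nat_mult[symmetric])
  also have "\<dots> \<le> 3 ^ n" using exp_le by (intro power_mono) auto
  finally show ?thesis by (simp add: exp_minus field_simps)
qed

lemma integral_le_const:
  fixes f :: "real \<Rightarrow> real"
  assumes "p \<le> q" "f integrable_on {p..q}" "\<And>u. p \<le> u \<Longrightarrow> u \<le> q \<Longrightarrow> f u \<le> C"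
  shows "integral {p..q} f \<le> (q - p) * C"
  using integral_le[of f "{p..q}" "\<lambda>_. C"] assms by (simp add: integrable_const_ivl)

lemma integral_ge_const:
  fixes f :: "real \<Rightarrow> real"
  assumes "p \<le> q" "f integrable_on {p..q}" "\<And>u. p \<le> u \<Longrightarrow> u \<le> q \<Longrightarrow> C \<le> f u"
  shows "(q - p) * C \<le> integral {p..q} f"
  using integral_le[of "\<lambda>_. C" "{p..q}" f] assms by (simp add: integrable_const_ivl)

lemma has_integral_inverse_square:
  fixes p q :: real
  assumes "0 < p" "p \<le> q"
  shows "((\<lambda>u. 1 / u\<^sup>2) has_integral (1 / p - 1 / q)) {p..q}"
proof -
  have "((\<lambda>u. 1 / u\<^sup>2) has_integral (- 1 / q - - 1 / p)) {p..q}"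
  proof (rule fundamental_theorem_of_calculus[OF assms(2)])
    fix x assume "x \<in> {p..q}"
    then have "0 < x" using assms by auto
    then show "((\<lambda>u. - 1 / u) has_vector_derivative 1 / x\<^sup>2) (at x within {p..q})"
      unfolding has_real_derivative_iff_has_vector_derivative[symmetric]
      by (auto intro!: derivative_eq_intros simp: power2_eq_square field_simps)
  qed
  then show ?thesis by simp
qed

lemma integral_le_inverse_square:
  fixes f :: "real \<Rightarrow> real"
  assumes "0 < p" "p \<le> q" "f integrable_on {p..q}"
    and "\<And>u. p \<le> u \<Longrightarrow> u \<le> q \<Longrightarrow> f u \<le> C / u\<^sup>2"
  shows "integral {p..q} f \<le> C * (1 / p - 1 / q)"
proof -
  have "((\<lambda>u. C / u\<^sup>2) has_integral C * (1 / p - 1 / q)) {p..q}"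
    using has_integral_mult_right[OF has_integral_inverse_square[OF assms(1,2)], of C] by simp
  then show ?thesis
    using integral_le[of f "{p..q}" "\<lambda>u. C / u\<^sup>2"] assms
    by (simp add: has_integral_integrable integral_unique)
qed

lemma powr_three_halves: "0 \<le> x \<Longrightarrow> x powr (3 / 2) = x * sqrt (x :: real)"
  by (cases "x = 0") (simp_all add: powr_add[of x 1 "1 / 2", simplified] powr_half_sqrt)

lemma two_sided_bound_mono_const:
  fixes f g c c\<^sub>1 c\<^sub>2 :: real
  assumes "0 \<le> g" "0 < c\<^sub>1" "c\<^sub>1 \<le> c" "c\<^sub>2 \<le> c" "g / c\<^sub>1 \<le> f" "f \<le> c\<^sub>2 * g"
  shows "g / c \<le> f \<and> f \<le> c * g"
proof
  show "g / c \<le> f" using assms divide_left_mono[of c\<^sub>1 c g] by simp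
  show "f \<le> c * g" using assms mult_right_mono[of c\<^sub>2 c g] by simp
qed

lemma ln_nonpos: "0 \<le> u \<Longrightarrow> u \<le> (1::real) \<Longrightarrow> ln u \<le> 0"
  by (cases "u = 0") (auto simp: ln_le_zero_iff)

definition phi :: "real \<Rightarrow> real \<Rightarrow> real" where
  "phi v u = exp (- v * u) * u / ((ln u)\<^sup>2 + 1)"

lemma phi_nonneg: "0 \<le> u \<Longrightarrow> 0 \<le> phi v u"
  unfolding phi_def by (intro divide_nonneg_nonneg mult_nonneg_nonneg) auto

lemma continuous_on_phi:
  assumes "0 \<le> v"
  shows "continuous_on {0..1} (phi v)"
proof (rule continuous_on_if_dominated_at_left[where g = "\<lambda>u. u"])
  fix x :: real assume "0 < x"
  moreover have "(ln x)\<^sup>2 + 1 \<noteq> 0" by (smt (verit) zero_le_power2)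
  ultimately show "isCont (phi v) x" unfolding phi_def
    by (auto intro!: continuous_intros)
next
  fix u :: real assume u: "0 \<le> u"
  have "\<bar>phi v u\<bar> = exp (- v * u) * u / ((ln u)\<^sup>2 + 1)"
    using u unfolding phi_def by (simp add: abs_mult)
  also have "\<dots> \<le> 1 * u / 1"
    using u assms by (intro frac_le mult_mono) auto
  finally show "\<bar>phi v u\<bar> \<le> u" by simp
qed (auto simp: phi_def intro: continuous_intros)

lemma phi_integrable:
  "0 \<le> v \<Longrightarrow> 0 \<le> p \<Longrightarrow> q \<le> 1 \<Longrightarrow> phi v integrable_on {p..q}"
  by (rule integrable_on_subinterval[OF integrable_continuous_interval[OF continuous_on_phi]]) auto

lemma phi_le_head:
  fixes v w u :: real
  assumes "0 \<le> v" "1 \<le> w" "0 \<le> u" "u \<le> 1 / w"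
  shows "phi v u \<le> 1 / (w * ((ln w)\<^sup>2 + 1))"
proof (cases "u = 0")
  case True then show ?thesis using assms by (simp add: phi_def)
next
  case False
  then have "0 < u" using assms by simp
  then have "ln u \<le> - ln w" using assms by (simp add: ln_div flip: ln_le_cancel_iff)
  moreover have "0 \<le> ln w" using assms by simp
  ultimately have "(ln w)\<^sup>2 \<le> (ln u)\<^sup>2" using power_mono[of "ln w" "- ln u" 2] by simp
  have "phi v u \<le> 1 * (1 / w) / ((ln w)\<^sup>2 + 1)"
    unfolding phi_def using assms \<open>0 < u\<close> \<open>(ln w)\<^sup>2 \<le> (ln u)\<^sup>2\<close>
    by (intro frac_le mult_mono) (auto simp: add_nonneg_pos)
  then show ?thesis by simp
qed

lemma phi_le_tail:
  fixes v w u :: real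
  assumes v: "0 \<le> v" and u: "0 < u" "u \<le> 1" and uw: "1 \<le> u * w" "u * w \<le> 1 + v * u"
  shows "phi v u \<le> 3125 / (w ^ 3 * ((ln w)\<^sup>2 + 1) * u\<^sup>2)"
proof -
  define r where "r = u * w"
  define M where "M = - ln u"
  define D where "D = ln r"
  have w: "0 < w" using zero_less_mult_pos[of u w] u uw by linarith
  have M: "0 \<le> M" using u unfolding M_def by simp
  have D: "0 \<le> D" "1 + D \<le> r" using uw ln_le_minus_one[of r] unfolding D_def r_def by auto
  have "ln w = M + D" unfolding M_def D_def r_def using u w by (simp add: ln_mult)
  then have "(ln w)\<^sup>2 + 1 \<le> (M\<^sup>2 + 1) * (1 + D)\<^sup>2"
    using power2_sum_plus_one_le[OF D(1), of M] by simp
  also have "\<dots> \<le> (M\<^sup>2 + 1) * r\<^sup>2" using D by (intro mult_left_mono power_mono) auto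
  finally have logs: "((ln w)\<^sup>2 + 1) / (M\<^sup>2 + 1) \<le> r\<^sup>2"
    by (subst pos_divide_le_eq) (auto simp: add_nonneg_pos mult.commute)
  \<comment> \<open>u^3 w^3 = r^3 and the logarithmic ratio costs r^2; the decay exp (-v u) r^5 \<le> 5^5 pays for both\<close>
  have decay: "exp (- (v * u)) * r ^ 5 \<le> 3125"
    using exp_minus_times_power_le[of "v * u" r 5] v u uw unfolding r_def by simp
  have "phi v u * (w ^ 3 * ((ln w)\<^sup>2 + 1) * u\<^sup>2)
        = exp (- (v * u)) * r ^ 3 * (((ln w)\<^sup>2 + 1) / (M\<^sup>2 + 1))"
    unfolding phi_def M_def r_def by (simp add: power2_eq_square power3_eq_cube field_simps)
  also have "\<dots> \<le> exp (- (v * u)) * r ^ 3 * r\<^sup>2"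
    using logs uw unfolding r_def by (intro mult_left_mono) auto
  also have "\<dots> = exp (- (v * u)) * r ^ 5" by (simp add: eval_nat_numeral)
  also have "\<dots> \<le> 3125" by (rule decay)
  moreover have "0 < w ^ 3 * ((ln w)\<^sup>2 + 1) * u\<^sup>2" using u w by (simp add: add_nonneg_pos)
  ultimately show ?thesis by (simp add: pos_le_divide_eq)
qed

lemma phi_ge_at_scale:
  fixes v w u :: real
  assumes "1 \<le> w" "1 / (2 * w) \<le> u" "u \<le> 1 / w" "v * u \<le> 1"
  shows "1 / (18 * w * ((ln w)\<^sup>2 + 1)) \<le> phi v u"
proof -
  have u: "0 < u" using assms by (smt (verit) divide_pos_pos)
  have "1 / 3 \<le> exp (- 1 :: real)" using inverse_power_three_le_exp_minus[of 1] by simp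
  also have "\<dots> \<le> exp (- v * u)" using assms by simp
  finally have "1 / 3 \<le> exp (- v * u)" .
  have "ln (1 / (2 * w)) \<le> ln u" using assms u by (subst ln_le_cancel_iff) auto
  then have "- ln u \<le> ln w + 1"
    using assms ln_le_minus_one[of 2] by (simp add: ln_div ln_mult)
  moreover have "u \<le> 1" using assms by (smt (verit) divide_le_eq_1)
  then have "0 \<le> - ln u" using u by simp
  ultimately have "(ln u)\<^sup>2 \<le> (ln w + 1)\<^sup>2" by (metis power2_minus power_mono)
  also have "\<dots> \<le> 2 * (ln w)\<^sup>2 + 2" using sum_squares_bound[of "ln w" 1] by (simp add: power2_sum)
  finally have "(ln u)\<^sup>2 + 1 \<le> 3 * ((ln w)\<^sup>2 + 1)" by simp (smt (verit) zero_le_power2)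
  then have "(1 / 3) * (1 / (2 * w)) / (3 * ((ln w)\<^sup>2 + 1)) \<le> phi v u"
    unfolding phi_def using assms u \<open>1 / 3 \<le> exp (- v * u)\<close>
    by (intro frac_le mult_mono) (auto simp: add_nonneg_pos)
  then show ?thesis by (simp add: field_simps)
qed

lemma integral_phi_le:
  fixes a v :: real
  assumes a: "0 < a" "a \<le> 1" and v: "0 \<le> v"
  shows "integral {0..a} (phi v) \<le> 3126 / ((v + 1 / a)\<^sup>2 * ((ln (v + 1 / a))\<^sup>2 + 1))"
proof -
  define w where "w = v + 1 / a"
  define P where "P = (ln w)\<^sup>2 + 1"
  have "1 \<le> 1 / a" using a by simp
  then have w: "1 \<le> w" using v unfolding w_def by linarith
  define g where "g = 1 / (w\<^sup>2 * P)"
  have P: "0 < P" unfolding P_def by (simp add: add_nonneg_pos)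
  have s: "0 < 1 / w" "1 / w \<le> a"
    using w a v unfolding w_def by (auto simp: field_simps)
  have "integral {0..1 / w} (phi v) \<le> (1 / w - 0) * (1 / (w * P))"
    using phi_le_head[OF v w] s a w unfolding P_def
    by (intro integral_le_const phi_integrable v) auto
  then have head: "integral {0..1 / w} (phi v) \<le> g"
    unfolding g_def by (simp add: power2_eq_square)
  have "integral {1 / w..a} (phi v) \<le> (3125 / (w ^ 3 * P)) * (1 / (1 / w) - 1 / a)"
  proof (intro integral_le_inverse_square phi_integrable s v)
    fix u assume u: "1 / w \<le> u" "u \<le> a"
    have "u * w \<le> 1 + v * u" using u a unfolding w_def by (simp add: algebra_simps)
    then have "phi v u \<le> 3125 / (w ^ 3 * P * u\<^sup>2)"
      using phi_le_tail[OF v, of u w] u s a w unfolding P_def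
      by (simp add: field_simps)
    then show "phi v u \<le> 3125 / (w ^ 3 * P) / u\<^sup>2" by simp
  qed (use s a in auto)
  also have "\<dots> \<le> (3125 / (w ^ 3 * P)) * w"
    using a w P by (intro mult_left_mono) auto
  finally have tail: "integral {1 / w..a} (phi v) \<le> 3125 * g"
    using w unfolding g_def by (simp add: power2_eq_square power3_eq_cube)
  have "integral {0..a} (phi v) = integral {0..1 / w} (phi v) + integral {1 / w..a} (phi v)"
    using s a by (intro Henstock_Kurzweil_Integration.integral_combine[symmetric] phi_integrable v) auto
  also have "\<dots> \<le> 3126 * g" using head tail by simp
  finally show ?thesis unfolding g_def w_def P_def by simp
qed

lemma integral_phi_ge:
  fixes a v :: real
  assumes a: "0 < a" "a \<le> 1" and v: "0 \<le> v"
  shows "1 / ((v + 1 / a)\<^sup>2 * ((ln (v + 1 / a))\<^sup>2 + 1)) / 36 \<le> integral {0..a} (phi v)"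
proof -
  define w where "w = v + 1 / a"
  define P where "P = (ln w)\<^sup>2 + 1"
  have "1 \<le> 1 / a" using a by simp
  then have w: "1 \<le> w" using v unfolding w_def by linarith
  have s: "0 < 1 / w" "1 / w \<le> a"
    using w a v unfolding w_def by (auto simp: field_simps)
  have "v / w \<le> 1" using a v w unfolding w_def by (simp add: divide_le_eq)
  have "(1 / w - 1 / (2 * w)) * (1 / (18 * w * P)) \<le> integral {1 / (2 * w)..1 / w} (phi v)"
  proof (intro integral_ge_const phi_integrable v)
    fix u assume u: "1 / (2 * w) \<le> u" "u \<le> 1 / w"
    have "v * u \<le> v * (1 / w)" using u v by (intro mult_left_mono) auto
    then show "1 / (18 * w * P) \<le> phi v u"
      using phi_ge_at_scale[OF w u] \<open>v / w \<le> 1\<close> unfolding P_def by simp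
  qed (use s w in \<open>auto simp: field_simps\<close>)
  also have "\<dots> \<le> integral {0..a} (phi v)"
    using s w a by (intro integral_subset_le phi_integrable v) (auto simp: field_simps intro: phi_nonneg)
  finally show ?thesis
    using w unfolding w_def[symmetric] P_def[symmetric] by (simp add: power2_eq_square field_simps)
qed

definition psi :: "real \<Rightarrow> real \<Rightarrow> real" where
  "psi v u = exp (- v * u) * sqrt u / (1 - ln u)"

lemma psi_nonneg: "0 \<le> u \<Longrightarrow> u \<le> 1 \<Longrightarrow> 0 \<le> psi v u"
  unfolding psi_def using ln_nonpos[of u] by (intro divide_nonneg_nonneg mult_nonneg_nonneg) auto

lemma continuous_on_psi:
  assumes "0 \<le> v"
  shows "continuous_on {0..1} (psi v)"
proof (rule continuous_on_if_dominated_at_left[where g = sqrt])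
  fix x :: real assume "0 < x" "x \<le> 1"
  then have "1 - ln x \<noteq> 0" using ln_nonpos[of x] by linarith
  then show "isCont (psi v) x" unfolding psi_def using \<open>0 < x\<close>
    by (auto intro!: continuous_intros)
next
  fix u :: real assume u: "0 \<le> u" "u \<le> 1"
  then have "ln u \<le> 0" by (rule ln_nonpos)
  have "\<bar>psi v u\<bar> = exp (- v * u) * sqrt u / (1 - ln u)"
    using u \<open>ln u \<le> 0\<close> unfolding psi_def by (simp add: abs_mult)
  also have "\<dots> \<le> 1 * sqrt u / 1"
    using u assms \<open>ln u \<le> 0\<close> by (intro frac_le mult_mono) auto
  finally show "\<bar>psi v u\<bar> \<le> sqrt u" by simp
qed (auto simp: psi_def intro: continuous_intros)

lemma psi_integrable:
  "0 \<le> v \<Longrightarrow> 0 \<le> p \<Longrightarrow> q \<le> 1 \<Longrightarrow> psi v integrable_on {p..q}"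
  by (rule integrable_on_subinterval[OF integrable_continuous_interval[OF continuous_on_psi]]) auto

lemma psi_le_head:
  fixes v w u :: real
  assumes "0 \<le> v" "1 \<le> w" "0 \<le> u" "u \<le> 1 / w"
  shows "psi v u \<le> 1 / (sqrt w * (1 + ln w))"
proof (cases "u = 0")
  case True then show ?thesis using assms by (simp add: psi_def)
next
  case False
  then have "0 < u" using assms by simp
  then have "1 + ln w \<le> 1 - ln u" using assms by (simp add: ln_div flip: ln_le_cancel_iff)
  moreover have "sqrt u \<le> 1 / sqrt w"
    using real_sqrt_le_mono[OF assms(4)] by (simp add: real_sqrt_divide)
  moreover have "0 < 1 + ln w" using ln_ge_zero[OF assms(2)] by linarith
  ultimately have "psi v u \<le> 1 * (1 / sqrt w) / (1 + ln w)"
    unfolding psi_def using assms by (intro frac_le mult_mono) auto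
  then show ?thesis by simp
qed

lemma psi_le_tail:
  fixes v w u :: real
  assumes v: "0 \<le> v" and u: "0 < u" "u \<le> 1" and uw: "1 \<le> u * w" "u * w \<le> 1 + v * u"
  shows "psi v u \<le> 256 / (w\<^sup>2 * sqrt w * (1 + ln w) * u\<^sup>2)"
proof -
  define r where "r = u * w"
  define M where "M = - ln u"
  define D where "D = ln r"
  have w: "0 < w" using zero_less_mult_pos[of u w] u uw by linarith
  have M: "0 \<le> M" using u unfolding M_def by simp
  have D: "0 \<le> D" "1 + D \<le> r" using uw ln_le_minus_one[of r] unfolding D_def r_def by auto
  have lnw: "ln w = M + D" unfolding M_def D_def r_def using u w by (simp add: ln_mult)
  then have "1 + ln w \<le> (1 + M) * (1 + D)" using M D by (simp add: algebra_simps)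
  also have "\<dots> \<le> (1 + M) * r" using M D by (intro mult_left_mono) auto
  finally have logs: "(1 + ln w) / (1 + M) \<le> r"
    using M by (subst pos_divide_le_eq) (auto simp: mult.commute)
  have "r * 1 \<le> r * r" using uw unfolding r_def by (intro mult_left_mono) auto
  then have "r \<le> r\<^sup>2" by (simp add: power2_eq_square)
  then have "sqrt r \<le> r" using real_sqrt_le_mono[of r "r\<^sup>2"] uw unfolding r_def by simp
  have decay: "exp (- (v * u)) * r ^ 4 \<le> 256"
    using exp_minus_times_power_le[of "v * u" r 4] v u uw unfolding r_def by simp
  have "psi v u * (w\<^sup>2 * sqrt w * (1 + ln w) * u\<^sup>2)
        = exp (- (v * u)) * sqrt r * r\<^sup>2 * ((1 + ln w) / (1 + M))"
    unfolding psi_def M_def r_def using u w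
    by (simp add: real_sqrt_mult power2_eq_square field_simps)
  also have "\<dots> \<le> exp (- (v * u)) * r * r\<^sup>2 * r"
    using logs \<open>sqrt r \<le> r\<close> uw w M D lnw unfolding r_def
    by (intro mult_mono) (auto simp: add_nonneg_pos ln_ge_zero)
  also have "\<dots> = exp (- (v * u)) * r ^ 4" by (simp add: eval_nat_numeral)
  also have "\<dots> \<le> 256" by (rule decay)
  moreover have "0 < w\<^sup>2 * sqrt w * (1 + ln w) * u\<^sup>2"
    using u w uw lnw M D by simp
  ultimately show ?thesis by (simp add: pos_le_divide_eq)
qed

lemma psi_le:
  fixes v u :: real
  assumes v: "0 \<le> v" and u: "0 < u" "u \<le> 1"
  shows "psi v u \<le> 256 / ((v + 1)\<^sup>2 * sqrt (v + 1) * (1 + ln (v + 1)) * u\<^sup>2)"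
proof (cases "u * (v + 1) \<le> 1")
  case True
  have w: "0 < (v + 1)\<^sup>2 * u\<^sup>2" "(v + 1)\<^sup>2 * u\<^sup>2 \<le> 1" "0 < sqrt (v + 1) * (1 + ln (v + 1))"
    using True u v by (auto simp: power_mult_distrib[symmetric] ac_simps power_le_one add_pos_nonneg)
  have "psi v u \<le> 1 / (sqrt (v + 1) * (1 + ln (v + 1)))"
    using True u v by (intro psi_le_head) (auto simp: field_simps)
  also have "\<dots> \<le> 256 / ((v + 1)\<^sup>2 * u\<^sup>2) / (sqrt (v + 1) * (1 + ln (v + 1)))"
    using w by (intro divide_right_mono) (auto simp: le_divide_eq)
  finally show ?thesis by (simp add: ac_simps)
next
  case False
  then show ?thesis
    using psi_le_tail[OF v u, of "v + 1"] u by (simp add: algebra_simps)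
qed

lemma psi_ge_at_scale:
  fixes v w u :: real
  assumes "1 \<le> w" "1 / (2 * w) \<le> u" "u \<le> 1" "v * u \<le> 2"
  shows "1 / (36 * sqrt w * (1 + ln w)) \<le> psi v u"
proof -
  have u: "0 < u" using assms by (smt (verit) divide_pos_pos)
  have "1 / 9 \<le> exp (- 2 :: real)" using inverse_power_three_le_exp_minus[of 2] by simp
  also have "\<dots> \<le> exp (- v * u)" using assms by simp
  finally have E: "1 / 9 \<le> exp (- v * u)" .
  have "1 / (4 * w) \<le> 1 / (2 * w)" using assms by (simp add: field_simps)
  then have "sqrt (1 / (4 * w)) \<le> sqrt u" using assms by (intro real_sqrt_le_mono) simp
  then have S: "1 / (2 * sqrt w) \<le> sqrt u" by (simp add: real_sqrt_divide real_sqrt_mult)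
  have "ln (1 / (2 * w)) \<le> ln u" using assms u by (subst ln_le_cancel_iff) auto
  then have "- ln u \<le> ln 2 + ln w" using assms by (simp add: ln_div ln_mult)
  moreover have "0 \<le> ln w" using assms by simp
  moreover have "ln 2 \<le> (1::real)" using ln_le_minus_one[of 2] by simp
  ultimately have "1 - ln u \<le> 2 * (1 + ln w)" unfolding distrib_left by linarith
  moreover have "0 < 1 - ln u" using ln_nonpos[of u] assms u by linarith
  ultimately have "(1 / 9) * (1 / (2 * sqrt w)) / (2 * (1 + ln w)) \<le> psi v u"
    unfolding psi_def using E S u assms(1) by (intro frac_le mult_mono) auto
  then show ?thesis by (simp add: field_simps)
qed

lemma integral_psi_0_1_le:
  fixes v :: real
  assumes v: "0 \<le> v"
  shows "integral {0..1} (psi v) \<le> 257 / ((v + 1) * sqrt (v + 1) * (1 + ln (v + 1)))"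
proof -
  define w where "w = v + 1"
  define B where "B = 1 / (w * sqrt w * (1 + ln w))"
  have w: "1 \<le> w" using v unfolding w_def by simp
  have L: "0 < 1 + ln w" using ln_ge_zero[OF w] by linarith
  have s: "0 < 1 / w" "1 / w \<le> 1" using w by auto
  have "integral {0..1 / w} (psi v) \<le> (1 / w - 0) * (1 / (sqrt w * (1 + ln w)))"
    using psi_le_head[OF v w] s by (intro integral_le_const psi_integrable v) auto
  then have head: "integral {0..1 / w} (psi v) \<le> B" unfolding B_def by simp
  have "integral {1 / w..1} (psi v) \<le> (256 / (w\<^sup>2 * sqrt w * (1 + ln w))) * (1 / (1 / w) - 1 / 1)"
  proof (intro integral_le_inverse_square psi_integrable v s)
    fix u assume "1 / w \<le> u" "u \<le> 1"
    then show "psi v u \<le> 256 / (w\<^sup>2 * sqrt w * (1 + ln w)) / u\<^sup>2"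
      using psi_le[OF v, of u] s unfolding w_def by (simp add: divide_divide_eq_left)
  qed (use w in auto)
  also have "\<dots> \<le> (256 / (w\<^sup>2 * sqrt w * (1 + ln w))) * w"
    using w L by (intro mult_left_mono) auto
  also have "\<dots> = 256 * B" unfolding B_def using w by (simp add: power2_eq_square)
  finally have tail: "integral {1 / w..1} (psi v) \<le> 256 * B" .
  have "integral {0..1} (psi v) = integral {0..1 / w} (psi v) + integral {1 / w..1} (psi v)"
    using s by (intro Henstock_Kurzweil_Integration.integral_combine[symmetric] psi_integrable v) auto
  also have "\<dots> \<le> 257 * B" using head tail by simp
  finally show ?thesis unfolding B_def w_def by simp
qed

lemma integral_psi_le:
  fixes a v :: real
  assumes a: "0 \<le> a" "a \<le> 1" and v: "0 \<le> v"
  shows "integral {a..1} (psi v) \<le> 514 * (1 - a) / ((v + 1) * sqrt (v + 1) * (1 + ln (v + 1)))"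
proof -
  define w where "w = v + 1"
  define B where "B = 1 / (w * sqrt w * (1 + ln w))"
  have w: "1 \<le> w" using v unfolding w_def by simp
  have L: "0 < 1 + ln w" using ln_ge_zero[OF w] by linarith
  have B: "0 \<le> B" unfolding B_def using w L by simp
  show ?thesis
  proof (cases "1 / 2 \<le> a")
    case True
    have "integral {a..1} (psi v) \<le> (256 / (w\<^sup>2 * sqrt w * (1 + ln w))) * (1 / a - 1 / 1)"
    proof (intro integral_le_inverse_square psi_integrable v a)
      fix u assume "a \<le> u" "u \<le> 1"
      then show "psi v u \<le> 256 / (w\<^sup>2 * sqrt w * (1 + ln w)) / u\<^sup>2"
        using psi_le[OF v, of u] True unfolding w_def by (simp add: divide_divide_eq_left)
    qed (use True in auto)
    also have "\<dots> = (256 * B / w) * ((1 - a) / a)"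
      using True w unfolding B_def by (simp add: power2_eq_square field_simps)
    also have "\<dots> \<le> (256 * B) * (2 * (1 - a))"
    proof (intro mult_mono)
      show "256 * B / w \<le> 256 * B" using w B by (simp add: divide_le_eq mult_le_cancel_left1)
      have "(1 - a) * 1 \<le> (1 - a) * (2 * a)" using True a by (intro mult_left_mono) auto
      moreover have "0 < a" using True by simp
      ultimately show "(1 - a) / a \<le> 2 * (1 - a)" by (subst pos_divide_le_eq) (auto simp: algebra_simps)
    qed (use B a True in auto)
    also have "\<dots> \<le> 514 * (1 - a) * B"
      using a B mult_nonneg_nonneg[of "1 - a" B] by (simp add: algebra_simps)
    finally show ?thesis unfolding B_def w_def by simp
  next
    case False
    have "integral {a..1} (psi v) \<le> integral {0..1} (psi v)"
      using a by (intro integral_subset_le psi_integrable v) (auto intro: psi_nonneg)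
    also have "\<dots> \<le> 257 * B" using integral_psi_0_1_le[OF v] unfolding B_def w_def by simp
    also have "\<dots> \<le> 514 * (1 - a) * B" using False B by (intro mult_right_mono) auto
    finally show ?thesis unfolding B_def w_def by simp
  qed
qed

lemma integral_psi_ge_const:
  fixes a v :: real
  assumes a: "1 / 2 \<le> a" "a \<le> 1" and v: "0 \<le> v" and av: "a * v \<le> 1"
  shows "(1 - a) / 36 \<le> integral {a..1} (psi v)"
proof -
  have "(1 / 2) * v \<le> a * v" using a v by (intro mult_right_mono) auto
  then have "v \<le> 2" using av by linarith
  have "(1 - a) * (1 / 36) \<le> integral {a..1} (psi v)"
  proof (intro integral_ge_const psi_integrable v a)
    fix u assume u: "a \<le> u" "u \<le> 1"
    have "v * u \<le> 2 * 1" using \<open>v \<le> 2\<close> u a v by (intro mult_mono) auto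
    then show "1 / 36 \<le> psi v u" using psi_ge_at_scale[of 1 u v] a u by simp
  qed (use a in auto)
  then show ?thesis by simp
qed

lemma integral_psi_ge_at_scale:
  fixes a v :: real
  assumes a: "0 \<le> a" "a < 1 / 2" and v: "0 \<le> v" and av: "a * v \<le> 1"
  shows "1 / ((v + 1) * sqrt (v + 1) * (1 + ln (v + 1))) / 72 \<le> integral {a..1} (psi v)"
proof -
  define w where "w = v + 1"
  have w: "1 \<le> w" using v unfolding w_def by simp
  define m where "m = max a (1 / (2 * w))"
  have "1 / (2 * w) \<le> 1 / 2" using w by (simp add: field_simps)
  then have m: "a \<le> m" "1 / (2 * w) \<le> m" "m + 1 / (2 * w) \<le> 1"
    using a unfolding m_def by auto
  have "v / (2 * w) \<le> 1 / 2" using v unfolding w_def by (simp add: field_simps)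
  then have vm: "v * m \<le> 1" using av v unfolding m_def by (auto simp: max_def mult.commute)
  \<comment> \<open>the window [m, m + 1/(2w)] lies in [a, 1], at distance \<ge> 1/(2w) from 0, and has v u \<le> 3/2\<close>
  have "1 / (w * sqrt w * (1 + ln w)) / 72 = (m + 1 / (2 * w) - m) * (1 / (36 * sqrt w * (1 + ln w)))"
    by simp
  also have "\<dots> \<le> integral {m..m + 1 / (2 * w)} (psi v)"
  proof (intro integral_ge_const psi_integrable v)
    fix u assume u: "m \<le> u" "u \<le> m + 1 / (2 * w)"
    have "v * u \<le> v * (m + 1 / (2 * w))" using u v by (intro mult_left_mono) auto
    then have "v * u \<le> v * m + v / (2 * w)" by (simp add: distrib_left)
    then show "1 / (36 * sqrt w * (1 + ln w)) \<le> psi v u"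
      using psi_ge_at_scale[OF w, of u v] u m vm \<open>v / (2 * w) \<le> 1 / 2\<close> by simp
  qed (use m a w in auto)
  also have "\<dots> \<le> integral {a..1} (psi v)"
    using m a by (intro integral_subset_le psi_integrable v) (auto intro: psi_nonneg)
  finally show ?thesis unfolding w_def .
qed

lemma integral_psi_ge:
  fixes a v :: real
  assumes a: "0 \<le> a" "a \<le> 1" and v: "0 \<le> v" and av: "a * v \<le> 1"
  shows "(1 - a) / ((v + 1) * sqrt (v + 1) * (1 + ln (v + 1))) / 72 \<le> integral {a..1} (psi v)"
proof -
  define B where "B = 1 / ((v + 1) * sqrt (v + 1) * (1 + ln (v + 1)))"
  have "1 * 1 * 1 \<le> (v + 1) * sqrt (v + 1) * (1 + ln (v + 1))"
    using v by (intro mult_mono) auto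
  then have B: "0 \<le> B" "B \<le> 1" unfolding B_def by auto
  have "(1 - a) * B / 72 \<le> integral {a..1} (psi v)"
  proof (cases "1 / 2 \<le> a")
    case True
    have "(1 - a) * B / 72 \<le> (1 - a) * 1 / 36"
      using a B by (intro frac_le mult_left_mono) auto
    also have "\<dots> \<le> integral {a..1} (psi v)" using integral_psi_ge_const[OF True a(2) v av] by simp
    finally show ?thesis .
  next
    case False
    have "(1 - a) * B / 72 \<le> B / 72" using a B by (simp add: mult_left_le_one_le)
    then show ?thesis using integral_psi_ge_at_scale[OF a(1) _ v av] False unfolding B_def by simp
  qed
  then show ?thesis unfolding B_def by simp
qed

lemma integral_phi_comparable:
  fixes a v :: real
  assumes "0 < a" "a \<le> 1" "0 \<le> v"
  shows "1 / ((v + 1 / a)\<^sup>2 * ((ln (v + 1 / a))\<^sup>2 + 1)) / 3126 \<le> integral {0..a} (phi v)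
    \<and> integral {0..a} (phi v) \<le> 3126 * (1 / ((v + 1 / a)\<^sup>2 * ((ln (v + 1 / a))\<^sup>2 + 1)))"
  by (rule two_sided_bound_mono_const[where c\<^sub>1 = 36 and c\<^sub>2 = 3126])
    (use integral_phi_le[OF assms] integral_phi_ge[OF assms] in simp_all)

lemma integral_psi_comparable:
  fixes a v :: real
  assumes "0 \<le> a" "a \<le> 1" "0 \<le> v" "a * v \<le> 1"
  shows "(1 - a) / ((v + 1) powr (3 / 2) * (1 + ln (v + 1))) / 3126 \<le> integral {a..1} (psi v)
    \<and> integral {a..1} (psi v) \<le> 3126 * ((1 - a) / ((v + 1) powr (3 / 2) * (1 + ln (v + 1))))"
proof -
  have "(v + 1) powr (3 / 2) = (v + 1) * sqrt (v + 1)" using assms(3) by (simp add: powr_three_halves)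
  then show ?thesis
    by (intro two_sided_bound_mono_const[where c\<^sub>1 = 72 and c\<^sub>2 = 514])
      (use assms integral_psi_le[OF assms(1-3)] integral_psi_ge[OF assms] in simp_all)
qed

theorem mainTheorem11:
  shows "(\<exists>c>0. \<forall>a v::real. 0 < a \<and> a \<le> 1 \<and> v > 0 \<longrightarrow>
            (let f = integral {0..a} (\<lambda>u. exp (- v * u) * u / ((ln u)\<^sup>2 + 1));
                 g = 1 / ((v + 1 / a)\<^sup>2 * ((ln (v + 1 / a))\<^sup>2 + 1))
             in g / c \<le> f \<and> f \<le> c * g))
       \<and> (\<exists>c>0. \<forall>a v::real. 0 \<le> a \<and> a \<le> 1 \<and> v > 0 \<and> a * v \<le> 1 \<longrightarrow>
            (let f = integral {a..1} (\<lambda>u. exp (- v * u) * sqrt u / (1 - ln u));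
                 g = (1 - a) / ((v + 1) powr (3/2) * (1 + ln (v + 1)))
             in g / c \<le> f \<and> f \<le> c * g))"
proof (intro conjI exI[of _ 3126] allI impI, unfold Let_def phi_def[symmetric] psi_def[symmetric])
qed (meson integral_phi_comparable integral_psi_comparable less_imp_le | simp)+

end
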